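(* An $A$-code $C$ of length $2$ satisfies $C=C^{\perp R}$ if and only if one of the following holds: (a) $C$ is of class I with $g_1=1$ and, when $\mathrm{char}\,\mathbb{F}\neq 2$, $g_2=0$; (b) $C$ is of class II with $g_2=1$; (c) $C$ is of class III with $g_1g_3=f$ in $\mathbb{F}[x]$ and, when $\mathrm{char}\,\mathbb{F}\neq2$, $g_2=0$.
   Context: Let $\mathbb{F}$ be a finite field, $f(x)\in\mathbb{F}[x]$ monic of degree $m$, $A=\mathbb{F}[x]/\langle f(x)\rangle$, elements identified with polynomials of degree $<m$. An $A$-code of length $l$ is an $A$-submodule of $A^l$; $C^\perp=\{a\in A^l:\sum_ia_ic_i=0\ \forall c\in C\}$ and $C^{\perp R}=\{(c_l,\ldots,c_1):(c_1,\ldots,c_l)\in C^\perp\}$. Every nonzero $A$-code has a unique canonical generator matrix (CGM): a matrix over $A$ whose rows generate $C$, whose rows are monic with strictly increasing leading indices (index of first nonzero entry), whose leading entries (first nonzero entries) divide $f$, such that $(f/L_i)\cdot(\text{row } i)$ is an $A$-combination of the later rows where $L_i$ is the leading entry of row $i$, and such that every entry lying above a leading entry has smaller degree than that leading entry. The nonzero codes of length 2 fall into three classes: class I, with CGM $(g_1\ g_2)$ where $0\ne g_1\mid f$ and $g_1\mid g_2$; class II, with CGM $(0\ g_2)$ where $g_2\mid f$; class III, with CGM $\begin{pmatrix}g_1&g_2\\0&g_3\end{pmatrix}$ where $g_1,g_3$ are nonzero monic divisors of $f$, $g_3$ divides $(f/g_1)g_2$, and $\deg g_2<\deg g_3$.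 *)

theory Defs
  imports "HOL-Computational_Algebra.Polynomial"
begin

text \<open>The ring A = F[x]/(f) is modelled by its canonical representatives:
  polynomials p with p mod f = p (i.e. degree < m = degree f, or p = 0).
  Operations of A are the polynomial operations followed by reduction mod f.\<close>

definition A_elem :: "'a::field poly \<Rightarrow> 'a poly \<Rightarrow> bool" where
  "A_elem f p \<longleftrightarrow> p mod f = p"

definition A_space2 :: "'a::field poly \<Rightarrow> ('a poly \<times> 'a poly) set" where
  "A_space2 f = {(a1, a2). A_elem f a1 \<and> A_elem f a2}"

definition is_A_code2 :: "'a::field poly \<Rightarrow> ('a poly \<times> 'a poly) set \<Rightarrow> bool" where
  "is_A_code2 f C \<longleftrightarrow>
     C \<subseteq> A_space2 f \<and> (0, 0) \<in> C \<and>
     (\<forall>u\<in>C. \<forall>v\<in>C. ((fst u + fst v) mod f, (snd u + snd v) mod f) \<in> C) \<and>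
     (\<forall>a. A_elem f a \<longrightarrow> (\<forall>u\<in>C. ((a * fst u) mod f, (a * snd u) mod f) \<in> C))"

definition dual2 :: "'a::field poly \<Rightarrow> ('a poly \<times> 'a poly) set \<Rightarrow> ('a poly \<times> 'a poly) set" where
  "dual2 f C = {(a1, a2) \<in> A_space2 f. \<forall>(c1, c2)\<in>C. (a1 * c1 + a2 * c2) mod f = 0}"

definition dualR2 :: "'a::field poly \<Rightarrow> ('a poly \<times> 'a poly) set \<Rightarrow> ('a poly \<times> 'a poly) set" where
  "dualR2 f C = {(c2, c1) | c1 c2. (c1, c2) \<in> dual2 f C}"

definition span_row :: "'a::field poly \<Rightarrow> 'a poly \<Rightarrow> 'a poly \<Rightarrow> ('a poly \<times> 'a poly) set" where
  "span_row f u1 u2 = {((a * u1) mod f, (a * u2) mod f) | a. A_elem f a}"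

definition span_rows2 :: "'a::field poly \<Rightarrow> 'a poly \<Rightarrow> 'a poly \<Rightarrow> 'a poly \<Rightarrow> ('a poly \<times> 'a poly) set" where
  "span_rows2 f g1 g2 g3 =
     {((a * g1) mod f, (a * g2 + b * g3) mod f) | a b. A_elem f a \<and> A_elem f b}"

definition monic_div :: "'a::field poly \<Rightarrow> 'a poly \<Rightarrow> bool" where
  "monic_div f g \<longleftrightarrow> A_elem f g \<and> g \<noteq> 0 \<and> lead_coeff g = 1 \<and> g dvd f"

definition class_I :: "'a::field poly \<Rightarrow> ('a poly \<times> 'a poly) set \<Rightarrow> 'a poly \<Rightarrow> 'a poly \<Rightarrow> bool" where
  "class_I f C g1 g2 \<longleftrightarrow> monic_div f g1 \<and> A_elem f g2 \<and> g1 dvd g2 \<and> C = span_row f g1 g2"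

definition class_II :: "'a::field poly \<Rightarrow> ('a poly \<times> 'a poly) set \<Rightarrow> 'a poly \<Rightarrow> bool" where
  "class_II f C g2 \<longleftrightarrow> monic_div f g2 \<and> C = span_row f 0 g2"

text \<open>C is of class III with canonical generator matrix ((g1 g2),(0 g3)).
  The condition deg g2 < deg g3 is read with deg 0 = -infinity.\<close>
definition class_III :: "'a::field poly \<Rightarrow> ('a poly \<times> 'a poly) set \<Rightarrow> 'a poly \<Rightarrow> 'a poly \<Rightarrow> 'a poly \<Rightarrow> bool" where
  "class_III f C g1 g2 g3 \<longleftrightarrow> monic_div f g1 \<and> monic_div f g3 \<and>
     g3 dvd (f div g1) * g2 \<and> (g2 = 0 \<or> degree g2 < degree g3) \<and>
     C = span_rows2 f g1 g2 g3"

end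

theory Submission
  imports Defs
begin

text \<open>Write S(g1, g2, g3) for the code spanned by the rows (g1 g2) and (0 g3). If g1 g3 = f and
  2 g2 = 0, the reversed inner product of any two elements of S(g1, g2, g3) is a combination of
  2 g1 g2 and g1 g3 = f, so S(g1, g2, g3) is self-dual. Conversely, let C be self-dual and let g1 be
  the monic multiple of a nonzero first coordinate of least degree (or g1 = f if all first
  coordinates vanish). Division with remainder shows that g1 divides f and every first coordinate,
  so (0, f/g1) is orthogonal to C and hence lies in C. Reducing the second entry of a row (g1, h)
  modulo g3 = f/g1 gives (g1, r) in C with deg r < deg g3; orthogonality of (g1, r) to itself gives
  g3 | 2r, so 2r = 0. Since reversed duality reverses inclusions, the self-dual code
  S(g1, r, g3) contained in C equals C. Whether g1 = 1, g3 = 1 or neither decides the class.\<close>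

lemma A_elem_iff_degree:
  fixes f p :: "'a::field poly"
  assumes "f \<noteq> 0"
  shows "A_elem f p \<longleftrightarrow> p = 0 \<or> degree p < degree f"
  using degree_mod_less[OF assms, of p] mod_poly_less[of p f]
  by (auto simp: A_elem_def)

lemma A_elem_mod [simp]: "A_elem f (p mod f)"
  by (simp add: A_elem_def)

lemma A_elem_0 [simp]: "A_elem f 0"
  by (simp add: A_elem_def)

lemma A_code2_reduced:
  assumes "is_A_code2 f C" "(u, v) \<in> C"
  shows "u mod f = u" "v mod f = v"
  using assms unfolding is_A_code2_def A_space2_def A_elem_def by auto

lemma A_code2_lincomb:
  assumes code: "is_A_code2 f C" and "(u1, v1) \<in> C" "(u2, v2) \<in> C"
  shows "((a * u1 + b * u2) mod f, (a * v1 + b * v2) mod f) \<in> C"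
proof -
  have add: "\<forall>u\<in>C. \<forall>v\<in>C. ((fst u + fst v) mod f, (snd u + snd v) mod f) \<in> C"
    and smul: "\<forall>c. A_elem f c \<longrightarrow> (\<forall>u\<in>C. ((c * fst u) mod f, (c * snd u) mod f) \<in> C)"
    using code unfolding is_A_code2_def by blast+
  have scale: "((c * u) mod f, (c * v) mod f) \<in> C" if "(u, v) \<in> C" for c u v
    using smul[rule_format, OF A_elem_mod that] unfolding fst_conv snd_conv mod_mult_left_eq .
  show ?thesis
    using add[rule_format, OF scale[OF assms(2)] scale[OF assms(3)]]
    unfolding fst_conv snd_conv mod_add_eq .
qed

lemma dualR2_iff:
  "(x, y) \<in> dualR2 f C \<longleftrightarrow> A_elem f x \<and> A_elem f y \<and>
     (\<forall>c1 c2. (c1, c2) \<in> C \<longrightarrow> (y * c1 + x * c2) mod f = 0)"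
  unfolding dualR2_def dual2_def A_space2_def by auto

lemma dualR2_antimono:
  assumes "S \<subseteq> C"
  shows "dualR2 f C \<subseteq> dualR2 f S"
proof
  fix z assume "z \<in> dualR2 f C"
  then show "z \<in> dualR2 f S"
    using assms by (cases z) (auto simp: dualR2_iff)
qed

lemma self_dual_eq_of_subset:
  assumes "C = dualR2 f C" "S \<subseteq> C" "dualR2 f S = S"
  shows "C = S"
  using dualR2_antimono[OF assms(2), of f] assms by blast

lemma poly_add_self_eq_0_iff:
  fixes x :: "'a::field poly"
  shows "x + x = 0 \<longleftrightarrow> CHAR('a) = 2 \<or> x = 0"
proof -
  have "x + x = smult 2 x"
    using smult_add_left[of 1 1 x] by simp
  moreover have "(2::'a) = 0 \<longleftrightarrow> CHAR('a) = 2"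
  proof
    assume "(2::'a) = 0"
    then have "CHAR('a) dvd 2"
      using of_nat_eq_0_iff_char_dvd[of 2, where 'a = 'a] by simp
    then show "CHAR('a) = 2"
      using CHAR_not_1[where 'a = 'a] dvd_imp_le[of "CHAR('a)" 2] by (cases "CHAR('a)") auto
  next
    assume "CHAR('a) = 2"
    then show "(2::'a) = 0"
      using of_nat_eq_0_iff_char_dvd[of 2, where 'a = 'a] by simp
  qed
  ultimately show ?thesis by simp
qed

lemma span_rows2_memI:
  fixes f :: "'a::field poly"
  shows "((a * g1) mod f, (a * g2 + b * g3) mod f) \<in> span_rows2 f g1 g2 g3"
proof -
  have "((a mod f * g1) mod f, (a mod f * g2 + b mod f * g3) mod f) \<in> span_rows2 f g1 g2 g3"
    unfolding span_rows2_def by (blast intro: A_elem_mod)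
  moreover have "(a mod f * g2 + b mod f * g3) mod f = (a * g2 + b * g3) mod f"
    by (intro mod_add_cong mod_mult_left_eq)
  ultimately show ?thesis
    by (simp add: mod_mult_left_eq)
qed

lemma span_row_1_eq_span_rows2: "span_row f 1 g2 = span_rows2 f 1 g2 f"
  unfolding span_row_def span_rows2_def by (auto intro: A_elem_0)

lemma span_row_0_1_eq_span_rows2: "span_row f 0 1 = span_rows2 f f 0 1"
  unfolding span_row_def span_rows2_def by (auto intro: A_elem_0)

lemma span_rows2_subset_code:
  assumes code: "is_A_code2 f C" and "(x, y) \<in> C" "(0, z) \<in> C"
    and "x mod f = g1 mod f" "y mod f = g2 mod f" "z mod f = g3 mod f"
  shows "span_rows2 f g1 g2 g3 \<subseteq> C"
proof
  fix w assume "w \<in> span_rows2 f g1 g2 g3"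
  then obtain a b where w: "w = ((a * g1) mod f, (a * g2 + b * g3) mod f)"
    unfolding span_rows2_def by blast
  have "((a * x + b * 0) mod f, (a * y + b * z) mod f) \<in> C"
    using A_code2_lincomb[OF code assms(2,3)] .
  moreover have "(a * x + b * 0) mod f = (a * g1) mod f"
    using mod_mult_cong[OF refl assms(4), of a] by simp
  moreover have "(a * y + b * z) mod f = (a * g2 + b * g3) mod f"
    by (intro mod_add_cong mod_mult_cong refl assms(5,6))
  ultimately show "w \<in> C" unfolding w by simp
qed

lemma span_rows2_subset_dualR2:
  fixes g1 g2 g3 :: "'a::field poly"
  assumes fg: "g1 * g3 = f" and g2: "g2 + g2 = 0"
  shows "span_rows2 f g1 g2 g3 \<subseteq> dualR2 f (span_rows2 f g1 g2 g3)"
proof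
  fix z assume "z \<in> span_rows2 f g1 g2 g3"
  then obtain a b where z: "z = ((a * g1) mod f, (a * g2 + b * g3) mod f)"
    unfolding span_rows2_def by blast
  have orth: "((a * g2 + b * g3) mod f * ((a' * g1) mod f)
          + (a * g1) mod f * ((a' * g2 + b' * g3) mod f)) mod f = 0" for a' b'
  proof -
    have "(a * g2 + b * g3) * (a' * g1) + (a * g1) * (a' * g2 + b' * g3)
          = (a * a' * g1) * (g2 + g2) + (b * a' + a * b') * (g1 * g3)"
      by (simp add: algebra_simps)
    also have "\<dots> = (b * a' + a * b') * f"
      using fg g2 by simp
    finally have key: "(a * g2 + b * g3) * (a' * g1) + (a * g1) * (a' * g2 + b' * g3)
          = (b * a' + a * b') * f" .
    have "((a * g2 + b * g3) mod f * ((a' * g1) mod f)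
          + (a * g1) mod f * ((a' * g2 + b' * g3) mod f)) mod f
        = ((a * g2 + b * g3) * (a' * g1) + (a * g1) * (a' * g2 + b' * g3)) mod f"
      by (intro mod_add_cong mod_mult_eq)
    then show ?thesis unfolding key by simp
  qed
  show "z \<in> dualR2 f (span_rows2 f g1 g2 g3)"
    unfolding z dualR2_iff
  proof (intro conjI allI impI A_elem_mod)
    fix c1 c2 assume "(c1, c2) \<in> span_rows2 f g1 g2 g3"
    then obtain a' b' where c: "c1 = (a' * g1) mod f" "c2 = (a' * g2 + b' * g3) mod f"
      unfolding span_rows2_def by blast
    show "((a * g2 + b * g3) mod f * c1 + (a * g1) mod f * c2) mod f = 0"
      unfolding c by (rule orth)
  qed
qed

lemma dualR2_span_rows2_factor:
  fixes g1 g2 g3 :: "'a::field poly"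
  assumes fg: "g1 * g3 = f" and f: "f \<noteq> 0" and g2: "g2 + g2 = 0"
    and uv: "(u, v) \<in> dualR2 f (span_rows2 f g1 g2 g3)"
  obtains a b where "u = g1 * a" "v = a * g2 + b * g3"
proof -
  have orth: "\<And>c1 c2. (c1, c2) \<in> span_rows2 f g1 g2 g3 \<Longrightarrow> (v * c1 + u * c2) mod f = 0"
    using uv unfolding dualR2_iff by blast
  have g1: "g1 \<noteq> 0" and g3: "g3 \<noteq> 0"
    using fg f by auto
  have row1: "(g1 mod f, g2 mod f) \<in> span_rows2 f g1 g2 g3"
    using span_rows2_memI[of 1 g1 f g2 0 g3] by simp
  have row2: "(0, g3 mod f) \<in> span_rows2 f g1 g2 g3"
    using span_rows2_memI[of 0 g1 f g2 1 g3] by simp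
  have "(u * g3) mod f = 0"
    using orth[OF row2] by (simp add: mod_mult_right_eq)
  then have "g1 * g3 dvd u * g3"
    using fg by (simp add: mod_eq_0_iff_dvd)
  then obtain a where a: "u = g1 * a"
    using g3 by (auto elim: dvdE)
  have "(v * g1 + u * g2) mod f = (v * (g1 mod f) + u * (g2 mod f)) mod f"
    by (intro mod_add_cong mod_mult_right_eq[symmetric])
  then have "(v * g1 + u * g2) mod f = 0"
    using orth[OF row1] by simp
  moreover have "g1 * (v + a * g2) = v * g1 + u * g2"
    unfolding a by (simp add: algebra_simps)
  ultimately have "g1 * g3 dvd g1 * (v + a * g2)"
    using fg by (simp add: mod_eq_0_iff_dvd)
  then obtain b where b: "v + a * g2 = g3 * b"
    using g1 by (auto elim: dvdE)
  \<comment> \<open>2 g2 = 0 lets us turn v = g3 b - a g2 into a combination of the rows\<close>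
  have "v = (v + a * g2) + a * (g2 + g2) - a * g2"
    unfolding g2 by simp
  also have "\<dots> = a * g2 + b * g3"
    unfolding b by (simp add: algebra_simps)
  finally show thesis
    using a that by blast
qed

lemma dualR2_span_rows2_subset:
  fixes g1 g2 g3 :: "'a::field poly"
  assumes "g1 * g3 = f" "f \<noteq> 0" "g2 + g2 = 0"
  shows "dualR2 f (span_rows2 f g1 g2 g3) \<subseteq> span_rows2 f g1 g2 g3"
proof
  fix z assume z: "z \<in> dualR2 f (span_rows2 f g1 g2 g3)"
  obtain u v where zuv: "z = (u, v)"
    by (cases z)
  have "u mod f = u" "v mod f = v"
    using z unfolding zuv dualR2_iff A_elem_def by blast+
  moreover obtain a b where "u = g1 * a" "v = a * g2 + b * g3"
    using dualR2_span_rows2_factor[OF assms] z unfolding zuv by blast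
  ultimately show "z \<in> span_rows2 f g1 g2 g3"
    using span_rows2_memI[of a g1 f g2 b g3] unfolding zuv by (simp add: ac_simps)
qed

lemma span_rows2_self_dual:
  fixes g1 g2 g3 :: "'a::field poly"
  assumes "g1 * g3 = f" "f \<noteq> 0" "g2 + g2 = 0"
  shows "dualR2 f (span_rows2 f g1 g2 g3) = span_rows2 f g1 g2 g3"
  using dualR2_span_rows2_subset[OF assms] span_rows2_subset_dualR2[OF assms(1,3)] by blast

lemma A_code2_least_first_coord_dvd:
  fixes f :: "'a::field poly"
  assumes code: "is_A_code2 f C" and p: "(p, v) \<in> C" "p \<noteq> 0"
    and least: "\<And>q w. (q, w) \<in> C \<Longrightarrow> q \<noteq> 0 \<Longrightarrow> degree p \<le> degree q"
  shows "(u, w) \<in> C \<Longrightarrow> p dvd u" and "p dvd f"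
proof -
  have reduced: "(x mod p) mod f = x mod p" for x
  proof (cases "f = 0 \<or> x mod p = 0")
    case False
    then have "degree p < degree f"
      using degree_mod_less[of f p] A_code2_reduced(1)[OF code p(1)] p(2) by auto
    then show ?thesis
      using degree_mod_less'[OF p(2), of x] False by (intro mod_poly_less) simp
  qed auto
  have remainder: "(x + (- (x div p)) * p) mod f = x mod p" for x
  proof -
    have "x + (- (x div p)) * p = x - x div p * p" by simp
    also have "\<dots> = x mod p" by (rule minus_div_mult_eq_mod)
    finally show ?thesis using reduced by simp
  qed
  have dvd_if_mem: "p dvd x" if "(x mod p, y) \<in> C" for x y
  proof (rule ccontr)
    assume "\<not> p dvd x"
    then have "x mod p \<noteq> 0" by (simp add: mod_eq_0_iff_dvd)
    then have "degree p \<le> degree (x mod p)" and "degree (x mod p) < degree p"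
      by (rule least[OF that], rule degree_mod_less'[OF p(2)])
    then show False by simp
  qed
  show "p dvd u" if "(u, w) \<in> C"
  proof -
    have "((1 * u + (- (u div p)) * p) mod f, (1 * w + (- (u div p)) * v) mod f) \<in> C"
      by (rule A_code2_lincomb[OF code that p(1)])
    then show ?thesis
      unfolding mult_1_left remainder by (rule dvd_if_mem)
  qed
  show "p dvd f"
  proof -
    have "((- (f div p)) * p + 0 * p) mod f = (f + (- (f div p)) * p) mod f"
      by simp
    moreover have "(((- (f div p)) * p + 0 * p) mod f, ((- (f div p)) * v + 0 * v) mod f) \<in> C"
      by (rule A_code2_lincomb[OF code p(1) p(1)])
    ultimately have "(f mod p, ((- (f div p)) * v + 0 * v) mod f) \<in> C"
      unfolding remainder by simp
    then show ?thesis
      by (rule dvd_if_mem)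
  qed
qed

lemma A_code2_monic_first_coord_generator:
  fixes f :: "'a::field poly"
  assumes code: "is_A_code2 f C" and "(u0, v0) \<in> C" "u0 \<noteq> 0"
  obtains g1 h where "lead_coeff g1 = 1" "g1 dvd f" "(g1, h) \<in> C"
    "\<And>u w. (u, w) \<in> C \<Longrightarrow> g1 dvd u"
proof -
  have "\<exists>z. (z \<in> C \<and> fst z \<noteq> 0) \<and>
      (\<forall>y. y \<in> C \<and> fst y \<noteq> 0 \<longrightarrow> degree (fst z) \<le> degree (fst y))"
    by (rule ex_has_least_nat[of _ "(u0, v0)"]) (simp add: assms)
  then obtain p v where p: "(p, v) \<in> C" "p \<noteq> 0"
    and least: "\<And>q w. (q, w) \<in> C \<Longrightarrow> q \<noteq> 0 \<Longrightarrow> degree p \<le> degree q"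
    by fastforce
  define c where "c = inverse (lead_coeff p)"
  have c: "c \<noteq> 0"
    using p(2) by (simp add: c_def)
  have "([:c:] * p + 0 * p) mod f = smult c p"
    using A_code2_reduced(1)[OF code p(1)] by (simp add: mod_smult_left)
  then have "(smult c p, ([:c:] * v + 0 * v) mod f) \<in> C"
    using A_code2_lincomb[OF code p(1) p(1), of "[:c:]" 0] by simp
  moreover have "lead_coeff (smult c p) = 1"
    using p(2) by (simp add: c_def)
  moreover have "smult c p dvd f"
    using A_code2_least_first_coord_dvd(2)[OF code p(1,2) least] c by (rule smult_dvd)
  moreover have "smult c p dvd u" if "(u, w) \<in> C" for u w
    using A_code2_least_first_coord_dvd(1)[OF code p(1,2) least that] c by (rule smult_dvd)
  ultimately show thesis
    using that by blast
qed

lemma self_dual_code_cofactor_mem: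
  fixes f :: "'a::field poly"
  assumes sd: "C = dualR2 f C" and fg: "g1 * g3 = f"
    and dvd: "\<And>u w. (u, w) \<in> C \<Longrightarrow> g1 dvd u"
  shows "(0, g3 mod f) \<in> C"
proof -
  have "((g3 mod f) * c1 + 0 * c2) mod f = 0" if c: "(c1, c2) \<in> C" for c1 c2
  proof -
    obtain k where "c1 = g1 * k"
      using dvd[OF c] by (elim dvdE)
    then have "g3 * c1 = f * k"
      using fg by (simp add: ac_simps)
    then show ?thesis
      by (simp add: mod_mult_left_eq)
  qed
  then have "(0, g3 mod f) \<in> dualR2 f C"
    unfolding dualR2_iff by simp
  then show ?thesis
    using sd by simp
qed

lemma self_dual_code_double_eq_0:
  fixes f :: "'a::field poly"
  assumes sd: "C = dualR2 f C" and mem: "(g1 mod f, r) \<in> C"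
    and fg: "g1 * g3 = f" and f: "f \<noteq> 0" and r: "r = 0 \<or> degree r < degree g3"
  shows "r + r = 0"
proof (rule ccontr)
  assume nz: "r + r \<noteq> 0"
  have "(r * (g1 mod f) + (g1 mod f) * r) mod f = 0"
    using mem sd dualR2_iff[of "g1 mod f" r f C] by blast
  moreover have "(r * (g1 mod f) + (g1 mod f) * r) mod f = (r * g1 + g1 * r) mod f"
    by (intro mod_add_cong mod_mult_right_eq mod_mult_left_eq)
  moreover have "r * g1 + g1 * r = g1 * (r + r)"
    by (simp add: algebra_simps)
  ultimately have "g1 * g3 dvd g1 * (r + r)"
    using fg by (simp add: mod_eq_0_iff_dvd)
  then have "g3 dvd r + r"
    using fg f by auto
  then have "degree g3 \<le> degree (r + r)"
    using nz by (rule dvd_imp_degree_le)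
  moreover have "degree (r + r) \<le> degree r"
    using degree_add_le_max[of r r] by simp
  ultimately show False
    using r nz by auto
qed

lemma self_dual_code_eq_span_rows2:
  fixes f :: "'a::field poly"
  assumes f: "f \<noteq> 0" and code: "is_A_code2 f C" and sd: "C = dualR2 f C"
    and g1: "g1 dvd f" "(g1 mod f, h) \<in> C" and dvd: "\<And>u w. (u, w) \<in> C \<Longrightarrow> g1 dvd u"
  obtains g2 g3 where "g1 * g3 = f" "g2 + g2 = 0" "g2 = 0 \<or> degree g2 < degree g3"
    "C = span_rows2 f g1 g2 g3"
proof -
  define g3 where "g3 = f div g1"
  have fg: "g1 * g3 = f"
    using g1(1) by (simp add: g3_def)
  have g3: "g3 \<noteq> 0" "degree g3 \<le> degree f"
    using fg f by (auto intro: dvd_imp_degree_le)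
  define r where "r = h mod g3"
  have r: "r = 0 \<or> degree r < degree g3"
    unfolding r_def using degree_mod_less[OF g3(1)] .
  then have r_reduced: "r mod f = r"
    using g3(2) by (auto intro: mod_poly_less)
  have row2: "(0, g3 mod f) \<in> C"
    by (rule self_dual_code_cofactor_mem[OF sd fg dvd])
  have "((1 * (g1 mod f) + (- (h div g3)) * 0) mod f,
         (1 * h + (- (h div g3)) * (g3 mod f)) mod f) \<in> C"
    by (rule A_code2_lincomb[OF code g1(2) row2])
  moreover have "(1 * h + (- (h div g3)) * (g3 mod f)) mod f = (h + (- (h div g3)) * g3) mod f"
    by (simp only: mult_1_left) (intro mod_add_cong refl mod_mult_right_eq)
  moreover have "h + (- (h div g3)) * g3 = r"
    using minus_div_mult_eq_mod[of h g3] by (simp add: r_def)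
  ultimately have row1: "(g1 mod f, r) \<in> C"
    using r_reduced by simp
  have rr: "r + r = 0"
    by (rule self_dual_code_double_eq_0[OF sd row1 fg f r])
  have "span_rows2 f g1 r g3 \<subseteq> C"
    by (rule span_rows2_subset_code[OF code row1 row2]) simp_all
  then have "C = span_rows2 f g1 r g3"
    using self_dual_eq_of_subset[OF sd] span_rows2_self_dual[OF fg f rr] by blast
  with fg rr r show thesis
    by (rule that)
qed

lemma self_dual_code_canonical_form:
  fixes f :: "'a::field poly"
  assumes f: "lead_coeff f = 1" and code: "is_A_code2 f C" and sd: "C = dualR2 f C"
  obtains g1 g2 g3 where "lead_coeff g1 = 1" "g1 * g3 = f" "g2 + g2 = 0"
    "g2 = 0 \<or> degree g2 < degree g3" "C = span_rows2 f g1 g2 g3"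
proof -
  have f0: "f \<noteq> 0"
    using f by auto
  obtain g1 h where g1: "lead_coeff g1 = 1" "g1 dvd f" "(g1 mod f, h) \<in> C"
    "\<And>u w. (u, w) \<in> C \<Longrightarrow> g1 dvd u"
  proof (cases "\<exists>u w. (u, w) \<in> C \<and> u \<noteq> 0")
    case True
    then obtain u0 v0 where u0: "(u0, v0) \<in> C" "u0 \<noteq> 0"
      by blast
    show thesis
    proof (rule A_code2_monic_first_coord_generator[OF code u0])
      fix g1 h
      assume "lead_coeff g1 = 1" "g1 dvd f" "(g1, h) \<in> C" "\<And>u w. (u, w) \<in> C \<Longrightarrow> g1 dvd u"
      moreover from \<open>(g1, h) \<in> C\<close> have "g1 mod f = g1"
        by (rule A_code2_reduced(1)[OF code])
      ultimately show thesis
        using that[of g1 h] by simp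
    qed
  next
    case False
    \<comment> \<open>all first coordinates vanish: take g1 = f, whose row (f mod f, 0) is the zero word\<close>
    have "(0, 0) \<in> C"
      using code by (simp add: is_A_code2_def)
    then show thesis
      using that[of f 0] f False by auto
  qed
  obtain g2 g3 where "g1 * g3 = f" "g2 + g2 = 0" "g2 = 0 \<or> degree g2 < degree g3"
    "C = span_rows2 f g1 g2 g3"
    by (rule self_dual_code_eq_span_rows2[OF f0 code sd g1(2,3,4)])
  with g1(1) show thesis
    by (rule that)
qed

lemma self_dual_code_iff_canonical_form:
  fixes f :: "'a::field poly"
  assumes f: "lead_coeff f = 1" and code: "is_A_code2 f C"
  shows "C = dualR2 f C \<longleftrightarrow>
    (\<exists>g1 g2 g3. lead_coeff g1 = 1 \<and> g1 * g3 = f \<and> g2 + g2 = 0 \<and>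
      (g2 = 0 \<or> degree g2 < degree g3) \<and> C = span_rows2 f g1 g2 g3)"
    (is "_ \<longleftrightarrow> ?form")
proof
  assume "C = dualR2 f C"
  then show ?form
    by (elim self_dual_code_canonical_form[OF f code]) blast
next
  assume ?form
  then obtain g1 g2 g3 where "g1 * g3 = f" "g2 + g2 = 0" "C = span_rows2 f g1 g2 g3"
    by blast
  moreover have "f \<noteq> 0"
    using f by auto
  ultimately show "C = dualR2 f C"
    by (simp add: span_rows2_self_dual)
qed

lemma monic_degree_0_eq_1:
  fixes p :: "'a::field poly"
  assumes "lead_coeff p = 1" "degree p = 0"
  shows "p = 1"
  using degree_0_id[OF assms(2)] assms by (simp add: pCons_one)

lemma monic_divI:
  fixes f g :: "'a::field poly"
  assumes "lead_coeff g = 1" "g dvd f" "degree g < degree f"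
  shows "monic_div f g"
  using assms mod_poly_less[OF assms(3)] unfolding monic_div_def A_elem_def by auto

lemma canonical_form_imp_classes:
  fixes f :: "'a::field poly"
  assumes f: "lead_coeff f = 1" "degree f \<ge> 1"
    and g1: "lead_coeff g1 = 1" and fg: "g1 * g3 = f"
    and g2: "g2 + g2 = 0" "g2 = 0 \<or> degree g2 < degree g3"
    and C: "C = span_rows2 f g1 g2 g3"
  shows "(\<exists>g2. class_I f C 1 g2 \<and> (CHAR('a) \<noteq> 2 \<longrightarrow> g2 = 0)) \<or>
     class_II f C 1 \<or>
     (\<exists>g1 g2 g3. class_III f C g1 g2 g3 \<and> g1 * g3 = f \<and> (CHAR('a) \<noteq> 2 \<longrightarrow> g2 = 0))"
proof -
  have f0: "f \<noteq> 0"
    using f(1) by auto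
  have g3: "lead_coeff g3 = 1"
    using lead_coeff_mult[of g1 g3] f(1) g1 fg by simp
  have deg: "degree f = degree g1 + degree g3"
    using degree_mult_eq[of g1 g3] fg g1 g3 by fastforce
  have char: "CHAR('a) \<noteq> 2 \<longrightarrow> g2 = 0"
    using g2(1) poly_add_self_eq_0_iff by blast
  have one: "monic_div f 1"
    using f(2) by (intro monic_divI) auto
  consider "degree g1 = 0" | "degree g3 = 0" | "degree g1 > 0" "degree g3 > 0"
    by linarith
  then show ?thesis
  proof cases
    case 1
    then have "g1 = 1" "g3 = f"
      using monic_degree_0_eq_1[OF g1] fg by auto
    then have "class_I f C 1 g2"
      unfolding class_I_def span_row_1_eq_span_rows2
      using one g2(2) C A_elem_iff_degree[OF f0, of g2] by auto
    then show ?thesis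
      using char by blast
  next
    case 2
    then have "g1 = f" "g2 = 0" "g3 = 1"
      using monic_degree_0_eq_1[OF g3] fg g2(2) by auto
    then have "class_II f C 1"
      unfolding class_II_def span_row_0_1_eq_span_rows2 using one C by simp
    then show ?thesis
      by blast
  next
    case 3
    have "g1 dvd f" "g3 dvd f"
      unfolding fg[symmetric] by simp_all
    moreover have "degree g1 < degree f" "degree g3 < degree f"
      using deg 3 by simp_all
    ultimately have "monic_div f g1" "monic_div f g3"
      using g1 g3 by (simp_all add: monic_divI)
    then have "class_III f C g1 g2 g3"
      unfolding class_III_def using fg g2(2) C f by auto
    then show ?thesis
      using fg char by blast
  qed
qed

lemma classes_imp_canonical_form:
  fixes f :: "'a::field poly"
  assumes f: "lead_coeff f = 1"
    and classes: "(\<exists>g2. class_I f C 1 g2 \<and> (CHAR('a) \<noteq> 2 \<longrightarrow> g2 = 0)) \<or>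
     class_II f C 1 \<or>
     (\<exists>g1 g2 g3. class_III f C g1 g2 g3 \<and> g1 * g3 = f \<and> (CHAR('a) \<noteq> 2 \<longrightarrow> g2 = 0))"
  shows "\<exists>g1 g2 g3. lead_coeff g1 = 1 \<and> g1 * g3 = f \<and> g2 + g2 = 0 \<and>
      (g2 = 0 \<or> degree g2 < degree g3) \<and> C = span_rows2 f g1 g2 g3"
  using classes
proof (elim disjE exE conjE)
  fix g2 assume I: "class_I f C 1 g2" "CHAR('a) \<noteq> 2 \<longrightarrow> g2 = 0"
  have "f \<noteq> 0"
    using f by auto
  then have "g2 = 0 \<or> degree g2 < degree f"
    using I(1) A_elem_iff_degree unfolding class_I_def by blast
  moreover have "g2 + g2 = 0"
    using I(2) poly_add_self_eq_0_iff by blast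
  moreover have "C = span_rows2 f 1 g2 f"
    using I(1) unfolding class_I_def span_row_1_eq_span_rows2 by blast
  ultimately show ?thesis
    by (intro exI[of _ 1] exI[of _ g2] exI[of _ f]) simp
next
  assume "class_II f C 1"
  then show ?thesis
    unfolding class_II_def span_row_0_1_eq_span_rows2 using f
    by (intro exI[of _ f] exI[of _ 0] exI[of _ 1]) simp
next
  fix g1 g2 g3
  assume "class_III f C g1 g2 g3" "g1 * g3 = f" "CHAR('a) \<noteq> 2 \<longrightarrow> g2 = 0"
  then show ?thesis
    using poly_add_self_eq_0_iff[of g2] unfolding class_III_def monic_div_def by blast
qed

theorem mainTheorem6:
  fixes f :: "'a::{field,finite} poly" and C :: "('a poly \<times> 'a poly) set"
  assumes "lead_coeff f = 1" and "degree f \<ge> 1"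
    and "is_A_code2 f C"
  shows "C = dualR2 f C \<longleftrightarrow>
     (\<exists>g2. class_I f C 1 g2 \<and> (CHAR('a) \<noteq> 2 \<longrightarrow> g2 = 0)) \<or>
     class_II f C 1 \<or>
     (\<exists>g1 g2 g3. class_III f C g1 g2 g3 \<and> g1 * g3 = f \<and> (CHAR('a) \<noteq> 2 \<longrightarrow> g2 = 0))"
  unfolding self_dual_code_iff_canonical_form[OF assms(1,3)]
  using canonical_form_imp_classes[OF assms(1,2)] classes_imp_canonical_form[OF assms(1)] by blast

end
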